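(* Let $G$ be a non-abelian finite $p$-group ($p$ prime) possessing an abelian maximal subgroup $M$. Then $$A_G(t)=\frac{1}{|G|}\left(\frac{|Z(G)|}{1-|G|t}+\frac{|G|-|M|}{1-p|Z(G)|t}+\frac{|M|-|Z(G)|}{1-|M|t}\right).$$
   Context: For a finite group $G$ and $n\ge0$, let $\alpha_{G,n}$ be the number of orbits of $G$ acting on $G^n$ by simultaneous conjugation, and $A_G(t)=\sum_{n\ge0}\alpha_{G,n}t^n$, viewed as a rational function of $t$. *)

theory Defs
  imports "HOL-Algebra.Algebra" "HOL-Computational_Algebra.Formal_Power_Series"
begin

definition group_center :: "('a, 'b) monoid_scheme \<Rightarrow> 'a set" where
  "group_center G = {z \<in> carrier G. \<forall>x \<in> carrier G. z \<otimes>\<^bsub>G\<^esub> x = x \<otimes>\<^bsub>G\<^esub> z}"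

definition maximal_subgroup :: "'a set \<Rightarrow> ('a, 'b) monoid_scheme \<Rightarrow> bool" where
  "maximal_subgroup M G \<longleftrightarrow> subgroup M G \<and> M \<noteq> carrier G \<and>
     (\<forall>H. subgroup H G \<and> M \<subseteq> H \<longrightarrow> H = M \<or> H = carrier G)"

definition tuples :: "('a, 'b) monoid_scheme \<Rightarrow> nat \<Rightarrow> 'a list set" where
  "tuples G n = {xs. length xs = n \<and> set xs \<subseteq> carrier G}"

definition sim_conj_rel :: "('a, 'b) monoid_scheme \<Rightarrow> nat \<Rightarrow> ('a list \<times> 'a list) set" where
  "sim_conj_rel G n = {(xs, ys). xs \<in> tuples G n \<and> ys \<in> tuples G n \<and>
     (\<exists>g \<in> carrier G. ys = map (\<lambda>x. g \<otimes>\<^bsub>G\<^esub> x \<otimes>\<^bsub>G\<^esub> inv\<^bsub>G\<^esub> g) xs)}"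

definition alpha :: "('a, 'b) monoid_scheme \<Rightarrow> nat \<Rightarrow> nat" where
  "alpha G n = card (tuples G n // sim_conj_rel G n)"

definition A_series :: "('a, 'b) monoid_scheme \<Rightarrow> rat fps" where
  "A_series G = Abs_fps (\<lambda>n. of_nat (alpha G n))"

end

theory Submission
  imports Defs
begin

(* Burnside's lemma for simultaneous conjugation gives alpha_{G,n} |G| = sum_g |C_G(g)|^n, because
   a tuple is fixed by g exactly when its entries lie in the centralizer C_G(g).  If M is an abelian
   maximal subgroup of the nonabelian group G, then Z(G) <= M, C_G(g) = M for g in M - Z(G), and
   C_G(g) meets M in Z(G) for g outside M.  In a p-group a proper subgroup is properly contained in
   its normalizer, so M is normal, and G/M, having no nontrivial proper subgroups, has order p.  For
   g outside M we then have C_G(g) M = G, hence |C_G(g)| = p |Z(G)| by the second isomorphism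
   theorem.  The three kinds of elements contribute the three geometric series. *)

section \<open>Fixed points of actions of p-groups\<close>

lemma (in group) group_actionI:
  assumes closed: "\<And>g x. g \<in> carrier G \<Longrightarrow> x \<in> E \<Longrightarrow> f g x \<in> E"
    and one: "\<And>x. x \<in> E \<Longrightarrow> f \<one> x = x"
    and mult: "\<And>g h x. g \<in> carrier G \<Longrightarrow> h \<in> carrier G \<Longrightarrow> x \<in> E \<Longrightarrow> f (g \<otimes> h) x = f g (f h x)"
  shows "group_action G E (\<lambda>g. restrict (f g) E)"
proof -
  have bij: "restrict (f g) E \<in> carrier (BijGroup E)" if g: "g \<in> carrier G" for g
  proof -
    have "bij_betw (f g) E E"
    proof (rule bij_betw_byWitness[where f'="f (inv g)"])
      show "\<forall>a\<in>E. f (inv g) (f g a) = a" using g by (metis mult one inv_closed l_inv)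
      show "\<forall>a\<in>E. f g (f (inv g) a) = a" using g by (metis mult one inv_closed r_inv)
    qed (use closed g in auto)
    then show ?thesis by (simp add: BijGroup_def Bij_def)
  qed
  have "restrict (f (g \<otimes> h)) E = restrict (f g) E \<otimes>\<^bsub>BijGroup E\<^esub> restrict (f h) E"
    if "g \<in> carrier G" "h \<in> carrier G" for g h
    using that bij by (auto simp: BijGroup_def compose_def closed mult)
  then show ?thesis
    unfolding group_action_def group_hom_def group_hom_axioms_def
    by (auto intro!: homI bij group_BijGroup)
qed

lemma (in group_action) card_singleton_orbits:
  "card {Q \<in> orbits G E \<phi>. card Q = 1} = card {x \<in> E. \<forall>g \<in> carrier G. \<phi> g x = x}"
proof -
  let ?Fix = "{x \<in> E. \<forall>g \<in> carrier G. \<phi> g x = x}"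
  let ?Orb = "orbits G E \<phi>"
  have "{Q \<in> ?Orb. card Q = 1} = (\<lambda>x. {x}) ` ?Fix"
  proof (intro equalityI subsetI)
    fix Q assume Q: "Q \<in> {Q \<in> ?Orb. card Q = 1}"
    then obtain x where x: "x \<in> E" "Q = orbit G \<phi> x"
      by (simp add: orbits_def) blast
    then have "Q = {x}"
      using Q orbit_refl by (metis (mono_tags, lifting) card_1_singletonE mem_Collect_eq singletonD)
    then show "Q \<in> (\<lambda>x. {x}) ` ?Fix"
      using x by (auto simp: orbit_def)
  next
    fix Q assume "Q \<in> (\<lambda>x. {x}) ` ?Fix"
    then obtain x where x: "x \<in> ?Fix" "Q = {x}" by blast
    then have "orbit G \<phi> x = {x}"
      using orbit_refl[of x] by (auto simp: orbit_def)
    then show "Q \<in> {Q \<in> ?Orb. card Q = 1}"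
      using x by (auto simp: orbits_def)
  qed
  then show ?thesis
    by (simp add: card_image inj_on_def)
qed

lemma (in group_action) card_fixed_points_cong:
  fixes p :: nat
  assumes p: "Factorial_Ring.prime p" and order: "order G = p ^ k" and fin: "finite E"
  shows "card {x \<in> E. \<forall>g \<in> carrier G. \<phi> g x = x} mod p = card E mod p"
proof -
  let ?Fix = "{x \<in> E. \<forall>g \<in> carrier G. \<phi> g x = x}"
  let ?Orb = "orbits G E \<phi>"
  let ?indicator = "\<lambda>Q. if card Q = 1 then 1 else 0 :: nat"
  have orbit_mod: "card Q mod p = ?indicator Q mod p" if Q: "Q \<in> ?Orb" for Q
  proof -
    obtain x where x: "x \<in> E" "Q = orbit G \<phi> x"
      using Q by (simp add: orbits_def) blast
    have "card Q dvd p ^ k"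
      using orbit_stabilizer_theorem[OF x(1)] x(2) order by (metis dvd_triv_left)
    then obtain i where "card Q = p ^ i"
      using divides_primepow_nat[OF p] by auto
    then show ?thesis
      by (cases i) auto
  qed
  have "card E mod p = (\<Sum>Q \<in> ?Orb. card Q) mod p"
    using disjoint_sum[OF fin, of "\<lambda>_. 1::nat"] by simp
  also have "\<dots> = (\<Sum>Q \<in> ?Orb. card Q mod p) mod p"
    by (rule mod_sum_eq[symmetric])
  also have "\<dots> = (\<Sum>Q \<in> ?Orb. ?indicator Q mod p) mod p"
    using orbit_mod by (simp cong: sum.cong)
  also have "\<dots> = (\<Sum>Q \<in> ?Orb. ?indicator Q) mod p"
    by (rule mod_sum_eq)
  also have "(\<Sum>Q \<in> ?Orb. ?indicator Q) = card {Q \<in> ?Orb. card Q = 1}"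
    using fin by (simp add: orbits_def sum.If_cases Int_def)
  also have "\<dots> = card ?Fix"
    by (rule card_singleton_orbits)
  finally show ?thesis ..
qed

section \<open>Maximal subgroups of finite p-groups\<close>

lemma (in group) rcoset_mult_in_rcosets:
  assumes "H \<subseteq> carrier G" and "R \<in> rcosets H" and "g \<in> carrier G"
  shows "R #> g \<in> rcosets H"
proof -
  obtain a where a: "a \<in> carrier G" "R = H #> a"
    using assms(2) by (auto simp: RCOSETS_def)
  then have "R #> g = H #> (a \<otimes> g)"
    using assms by (simp add: coset_mult_assoc)
  then show ?thesis
    using assms a by (simp add: rcosetsI)
qed

lemma (in group) in_normalizer_if_rcoset_fixed:
  assumes H: "subgroup H G" "finite H" and x: "x \<in> carrier G"
    and fixed: "\<And>h. h \<in> H \<Longrightarrow> H #> x #> h = H #> x"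
  shows "x \<in> normalizer G H"
proof -
  have HG: "H \<subseteq> carrier G"
    using H subgroup.subset by blast
  have conj_closed: "x \<otimes> h \<otimes> inv x \<in> H" if h: "h \<in> H" for h
  proof -
    have hG: "h \<in> carrier G"
      using h HG by blast
    have "x \<otimes> h \<in> H #> x"
      using fixed[OF h] rcos_self[OF _ H(1)] x hG HG by (metis coset_mult_assoc m_closed)
    then show ?thesis
      using subgroup.rcos_module_imp[OF H(1) is_group x] x hG by simp
  qed
  have conj_image: "x <#\<^bsub>G\<^esub> H #> inv x = (\<lambda>h. x \<otimes> h \<otimes> inv x) ` H"
    by (auto simp: l_coset_def r_coset_def)
  have "x <#\<^bsub>G\<^esub> H #> inv x = H"
  proof (rule card_subset_eq[OF H(2)])
    show "x <#\<^bsub>G\<^esub> H #> inv x \<subseteq> H"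
      using conj_image conj_closed by auto
    have "inj_on (\<lambda>h. x \<otimes> h \<otimes> inv x) H"
      using x HG by (auto intro: inj_onI dest: conjugation_is_inj)
    then show "card (x <#\<^bsub>G\<^esub> H #> inv x) = card H"
      unfolding conj_image by (rule card_image)
  qed
  then show ?thesis
    using x HG by (simp add: normalizer_def stabilizer_def)
qed

locale pgroup = group G for G (structure) +
  fixes p :: nat
  assumes prime_p: "Factorial_Ring.prime p"
    and finite_carrier: "finite (carrier G)"
    and order_prime_power: "\<exists>k. order G = p ^ k"
begin

lemma prime_power_of_dvd_order: "d dvd order G \<Longrightarrow> \<exists>i. d = p ^ i"
  using order_prime_power divides_primepow_nat[OF prime_p] by auto

lemma prime_dvd_index:
  assumes "subgroup H G" and "H \<noteq> carrier G"
  shows "p dvd card (rcosets H)"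
proof -
  obtain i where i: "card (rcosets H) = p ^ i"
    using prime_power_of_dvd_order lagrange[OF assms(1)] by (metis dvd_triv_left)
  have "card H \<noteq> order G"
    using assms finite_carrier subgroup.subset by (metis card_subset_eq order_def)
  then have "i \<noteq> 0"
    using i lagrange[OF assms(1)] by (cases i) auto
  then show ?thesis
    using i by simp
qed

lemma subgroup_psubset_normalizer:
  assumes H: "subgroup H G" and proper: "H \<noteq> carrier G"
  shows "H \<subset> normalizer G H"
proof -
  have HG: "H \<subseteq> carrier G"
    using H subgroup.subset by blast
  let ?E = "rcosets H"
  let ?Fix = "{R \<in> ?E. \<forall>h \<in> H. R #> inv h = R}"
  \<comment> \<open>Acting by right multiplication, H fixes |G : H| cosets modulo p; as p divides |G : H|,
    it fixes some coset H x other than H.\<close>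
  interpret A: group_action "G\<lparr>carrier := H\<rparr>" ?E "\<lambda>h. restrict (\<lambda>R. R #> inv h) ?E"
  proof (rule group.group_actionI)
    show "group (G\<lparr>carrier := H\<rparr>)"
      using H by (rule subgroup_imp_group)
  qed (use HG in \<open>auto simp: subsetD rcoset_mult_in_rcosets coset_mult_assoc inv_mult_group
           subgroup.rcosets_carrier[OF H is_group]\<close>)
  obtain j where j: "order (G\<lparr>carrier := H\<rparr>) = p ^ j"
    using prime_power_of_dvd_order lagrange[OF H] by (simp add: order_def) (metis dvd_triv_right)
  have "card ?Fix mod p = card ?E mod p"
    using A.card_fixed_points_cong[OF prime_p j] finite_carrier
    by (simp add: RCOSETS_def cong: conj_cong)
  then have "p dvd card ?Fix"
    using prime_dvd_index[OF H proper] by (simp add: mod_eq_0_iff_dvd[symmetric])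
  then have "?Fix \<noteq> {H}"
    using prime_p by auto
  moreover have "H \<in> ?Fix"
    using H by (simp add: subgroup.subgroup_in_rcosets[OF H is_group] subgroup.rcos_const subgroup.m_inv_closed)
  ultimately obtain x where x: "x \<in> carrier G" "H #> x \<in> ?Fix" "H #> x \<noteq> H"
    by (auto simp: RCOSETS_def)
  have "H #> x #> h = H #> x" if "h \<in> H" for h
    using x(2) that H by (auto dest: bspec[of _ _ "inv h"] simp: subgroup.m_inv_closed subsetD[OF HG])
  then have "x \<in> normalizer G H"
    using in_normalizer_if_rcoset_fixed[OF H finite_subset[OF HG finite_carrier] x(1)] by blast
  moreover have "x \<notin> H"
    using x coset_join2[OF x(1) H] by blast
  moreover have "H \<subseteq> normalizer G H"
    using subgroup_in_normalizer[OF H] normal_imp_subgroup subgroup.subset by force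
  ultimately show ?thesis
    by blast
qed

lemma maximal_subgroup_normal:
  assumes "maximal_subgroup M G"
  shows "M \<lhd> G"
proof -
  have M: "subgroup M G" "M \<noteq> carrier G"
    using assms by (auto simp: maximal_subgroup_def)
  have "subgroup (normalizer G M) G"
    using M(1) subgroup.subset normalizer_imp_subgroup by blast
  then have "normalizer G M = carrier G"
    using assms subgroup_psubset_normalizer[OF M] by (auto simp: maximal_subgroup_def)
  then show ?thesis
    using subgroup_in_normalizer[OF M(1)] by simp
qed

lemma exists_ord_eq_prime:
  assumes "carrier G \<noteq> {\<one>}"
  shows "\<exists>x \<in> carrier G. ord x = p"
proof -
  obtain y where y: "y \<in> carrier G" "y \<noteq> \<one>"
    using assms one_closed by blast
  obtain b where b: "ord y = p ^ b"
    using prime_power_of_dvd_order ord_dvd_group_order[OF y(1)] by blast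
  have "b \<noteq> 0"
    using b y ord_eq_1[OF y(1)] by (cases b) auto
  then have "ord (y [^] (p ^ (b - 1))) = p ^ b div p ^ (b - 1)"
    using b prime_p ord_pow[OF y(1), of "p ^ (b - 1)"] by (simp add: le_imp_power_dvd prime_gt_0_nat)
  also have "\<dots> = p"
    using \<open>b \<noteq> 0\<close> prime_p by (cases b) auto
  finally show ?thesis
    using y(1) by blast
qed

lemma order_eq_prime_if_no_proper_subgroup:
  assumes nontrivial: "carrier G \<noteq> {\<one>}"
    and subgroups: "\<And>H. subgroup H G \<Longrightarrow> H = {\<one>} \<or> H = carrier G"
  shows "order G = p"
proof -
  obtain x where x: "x \<in> carrier G" "ord x = p"
    using exists_ord_eq_prime[OF nontrivial] by blast
  have card: "card (generate G {x}) = p"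
    using generate_pow_card[OF x(1)] x(2) by simp
  have "generate G {x} \<noteq> {\<one>}"
    using card prime_gt_1_nat[OF prime_p] by force
  moreover have "subgroup (generate G {x}) G"
    using x(1) by (simp add: generate_is_subgroup)
  ultimately have "generate G {x} = carrier G"
    using subgroups by blast
  then show ?thesis
    using card by (simp add: order_def)
qed

end

lemma (in normal) FactGroup_subgroups_if_maximal:
  assumes max: "maximal_subgroup H G" and K: "subgroup K (G Mod H)"
  shows "K = {H} \<or> K = carrier (G Mod H)"
proof -
  have union_K: "\<Union>K = {a \<in> carrier G. H #> a \<in> K}"
    using factgroup_subgroup_union_char[OF K] .
  have one_K: "H \<in> K"
    using subgroup.one_closed[OF K] by simp
  then have "H \<subseteq> \<Union>K"
    by blast
  then have "\<Union>K = H \<or> \<Union>K = carrier G"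
    using max factgroup_subgroup_union_subgroup[OF K] unfolding maximal_subgroup_def by blast
  moreover have "K = {H}" if "\<Union>K = H"
  proof -
    have "R = H" if R: "R \<in> K" for R
    proof -
      obtain a where a: "a \<in> carrier G" "R = H #> a"
        using R subgroup.subset[OF K] by (auto simp: FactGroup_def RCOSETS_def)
      then have "a \<in> H"
        using R union_K \<open>\<Union>K = H\<close> by blast
      then show "R = H"
        using a coset_join2[OF a(1) is_subgroup] by simp
    qed
    then show ?thesis
      using one_K by blast
  qed
  moreover have "K = carrier (G Mod H)" if "\<Union>K = carrier G"
    using that subgroup.subset[OF K] union_K by (auto simp: FactGroup_def RCOSETS_def)
  ultimately show ?thesis
    by blast
qed

lemma (in pgroup) card_rcosets_maximal_subgroup:
  assumes max: "maximal_subgroup M G"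
  shows "card (rcosets M) = p"
proof -
  have M: "subgroup M G" "M \<noteq> carrier G"
    using max by (auto simp: maximal_subgroup_def)
  interpret M: normal M G
    using maximal_subgroup_normal[OF max] .
  interpret Q: pgroup "G Mod M" p
  proof (intro pgroup.intro pgroup_axioms.intro M.factorgroup_is_group prime_p)
    show "finite (carrier (G Mod M))"
      using finite_carrier by (simp add: FactGroup_def RCOSETS_def)
    show "\<exists>k. order (G Mod M) = p ^ k"
      using prime_power_of_dvd_order lagrange[OF M(1)]
      by (simp add: order_def FactGroup_def) (metis dvd_triv_left)
  qed
  have "carrier (G Mod M) \<noteq> {\<one>\<^bsub>G Mod M\<^esub>}"
    using prime_dvd_index[OF M] prime_p by (auto simp: FactGroup_def)
  then have "order (G Mod M) = p"
    using Q.order_eq_prime_if_no_proper_subgroup M.FactGroup_subgroups_if_maximal[OF max]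
    by simp
  then show ?thesis
    by (simp add: order_def FactGroup_def)
qed

section \<open>Centralizers and the Burnside count\<close>

definition centralizer :: "('a, 'b) monoid_scheme \<Rightarrow> 'a set \<Rightarrow> 'a set" where
  "centralizer G S = {x \<in> carrier G. \<forall>s \<in> S. x \<otimes>\<^bsub>G\<^esub> s = s \<otimes>\<^bsub>G\<^esub> x}"

lemma group_center_eq_centralizer: "group_center G = centralizer G (carrier G)"
  by (simp add: group_center_def centralizer_def)

lemma (in group) centralizer_eq_carrier_iff:
  "g \<in> carrier G \<Longrightarrow> centralizer G {g} = carrier G \<longleftrightarrow> g \<in> group_center G"
  unfolding centralizer_def group_center_def by (auto simp: set_eq_iff eq_commute[of "g \<otimes> _"])

lemma (in group) subgroup_centralizer:
  assumes "S \<subseteq> carrier G"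
  shows "subgroup (centralizer G S) G"
proof (rule subgroupI)
  show "centralizer G S \<subseteq> carrier G"
    by (auto simp: centralizer_def)
  show "centralizer G S \<noteq> {}"
    using assms by (auto simp: centralizer_def intro!: exI[of _ \<one>])
next
  fix a assume a: "a \<in> centralizer G S"
  have "inv a \<otimes> s = s \<otimes> inv a" if s: "s \<in> S" for s
  proof -
    have ac: "a \<in> carrier G" and sc: "s \<in> carrier G" and comm: "a \<otimes> s = s \<otimes> a"
      using a s assms by (auto simp: centralizer_def)
    have "inv a \<otimes> s = inv a \<otimes> (s \<otimes> a) \<otimes> inv a"
      using ac sc by (simp add: m_assoc)
    also have "\<dots> = s \<otimes> inv a"
      using ac sc by (simp add: comm[symmetric] m_assoc[symmetric])
    finally show ?thesis .
  qed
  then show "inv a \<in> centralizer G S"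
    using a by (simp add: centralizer_def)
next
  fix a b assume "a \<in> centralizer G S" "b \<in> centralizer G S"
  then show "a \<otimes> b \<in> centralizer G S"
    using assms by (auto simp: centralizer_def m_assoc subset_iff) (simp add: m_assoc[symmetric])
qed

lemma (in group) subgroup_center: "subgroup (group_center G) G"
  unfolding group_center_eq_centralizer by (rule subgroup_centralizer) simp

lemma (in group) alpha_mult_order_eq_sum_card_centralizer:
  assumes fin: "finite (carrier G)"
  shows "alpha G n * order G = (\<Sum>g \<in> carrier G. card (centralizer G {g}) ^ n)"
proof -
  let ?E = "tuples G n"
  let ?f = "\<lambda>g xs. map (\<lambda>x. g \<otimes> x \<otimes> inv g) xs"
  interpret A: group_action G ?E "\<lambda>g. restrict (?f g) ?E"
    by (rule group_actionI) (auto simp: tuples_def m_assoc inv_mult_group intro!: map_idI)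
  have finite_E: "finite ?E"
    using finite_lists_length_eq[OF fin, of n] by (simp add: tuples_def conj_commute)
  have orbits: "orbits G ?E (\<lambda>g. restrict (?f g) ?E) = ?E // sim_conj_rel G n"
  proof -
    have "orbit G (\<lambda>g. restrict (?f g) ?E) xs = sim_conj_rel G n `` {xs}" if "xs \<in> ?E" for xs
      using that by (auto simp: orbit_def sim_conj_rel_def tuples_def subset_iff)
    then show ?thesis
      by (auto simp: orbits_def quotient_def)
  qed
  have invariants: "card (invariants ?E (\<lambda>g. restrict (?f g) ?E) g) = card (centralizer G {g}) ^ n"
    if g: "g \<in> carrier G" for g
  proof -
    have "g \<otimes> x \<otimes> inv g = x \<longleftrightarrow> x \<otimes> g = g \<otimes> x" if "x \<in> carrier G" for x
      using that g by (metis inv_solve_right m_closed)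
    then have "invariants ?E (\<lambda>g. restrict (?f g) ?E) g = {xs. set xs \<subseteq> centralizer G {g} \<and> length xs = n}"
      by (auto simp: invariants_def tuples_def centralizer_def map_idI subset_iff
          map_eq_conv[where g = "\<lambda>x. x", simplified])
    moreover have "finite (centralizer G {g})"
      using fin by (simp add: centralizer_def)
    ultimately show ?thesis
      by (simp add: card_lists_length_eq)
  qed
  show ?thesis
    using A.burnside[OF fin finite_E] invariants by (simp add: alpha_def orbits)
qed

section \<open>Groups with an abelian maximal subgroup\<close>

lemma inverse_one_minus_const_X:
  "inverse (1 - fps_const (c :: 'a :: field) * fps_X) = Abs_fps (\<lambda>n. c ^ n)"
proof (rule fps_inverse_unique, rule fps_ext)
  fix n
  have "(1 - fps_const c * fps_X) * Abs_fps (\<lambda>n. c ^ n)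
      = Abs_fps (\<lambda>n. c ^ n) - fps_const c * (fps_X * Abs_fps (\<lambda>n. c ^ n))"
    by (simp add: algebra_simps)
  then show "fps_nth ((1 - fps_const c * fps_X) * Abs_fps (\<lambda>n. c ^ n)) n = fps_nth 1 n"
    by (cases n) simp_all
qed

locale abelian_maximal_subgroup = group G for G (structure) +
  fixes M :: "'a set"
  assumes maximal: "maximal_subgroup M G"
    and abelian: "\<forall>x \<in> M. \<forall>y \<in> M. x \<otimes> y = y \<otimes> x"
    and not_comm: "\<not> comm_group G"
begin

lemma M_subset_carrier: "M \<subseteq> carrier G"
  using maximal subgroup.subset by (auto simp: maximal_subgroup_def)

lemma M_subset_centralizer: "g \<in> M \<Longrightarrow> M \<subseteq> centralizer G {g}"
  using abelian M_subset_carrier by (auto simp: centralizer_def)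

lemma central_if_M_psubset_centralizer:
  assumes "g \<in> carrier G" and "M \<subset> centralizer G {g}"
  shows "g \<in> group_center G"
  using maximal assms subgroup_centralizer[of "{g}"] centralizer_eq_carrier_iff[of g]
  by (auto simp: maximal_subgroup_def)

lemma not_M_subset_center: "\<not> M \<subseteq> group_center G"
proof
  assume M_central: "M \<subseteq> group_center G"
  have "x \<in> group_center G" if x: "x \<in> carrier G" for x
  proof (cases "x \<in> M")
    case False
    have "M \<subseteq> centralizer G {x}"
      using M_central x unfolding centralizer_def group_center_def by blast
    moreover have "x \<in> centralizer G {x}"
      using x by (simp add: centralizer_def)
    ultimately show ?thesis
      using central_if_M_psubset_centralizer[OF x] False by blast
  qed (use M_central in blast)
  then have "comm_group G"
    by (intro group_comm_groupI) (auto simp: group_center_def)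
  with not_comm show False ..
qed

lemma center_subset_M: "group_center G \<subseteq> M"
proof
  fix z assume z: "z \<in> group_center G"
  show "z \<in> M"
  proof (rule ccontr)
    assume "z \<notin> M"
    have "m \<in> group_center G" if m: "m \<in> M" for m
    proof -
      have "z \<in> centralizer G {m}"
        using z m M_subset_carrier unfolding centralizer_def group_center_def by blast
      then show ?thesis
        using central_if_M_psubset_centralizer M_subset_centralizer[OF m] m M_subset_carrier \<open>z \<notin> M\<close>
        by blast
    qed
    with not_M_subset_center show False
      by blast
  qed
qed

lemma centralizer_eq_M:
  assumes "g \<in> M" and "g \<notin> group_center G"
  shows "centralizer G {g} = M"
  using assms M_subset_carrier M_subset_centralizer[OF assms(1)] central_if_M_psubset_centralizer[of g]
  by blast

lemma centralizer_Int_M: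
  assumes g: "g \<in> carrier G" "g \<notin> M"
  shows "centralizer G {g} \<inter> M = group_center G"
proof (intro equalityI subsetI)
  fix m assume m: "m \<in> centralizer G {g} \<inter> M"
  then have "g \<in> centralizer G {m}"
    using g by (auto simp: centralizer_def)
  then show "m \<in> group_center G"
    using central_if_M_psubset_centralizer M_subset_centralizer m g M_subset_carrier by blast
next
  fix z assume "z \<in> group_center G"
  then show "z \<in> centralizer G {g} \<inter> M"
    using g center_subset_M unfolding centralizer_def group_center_def by blast
qed

lemma card_centralizer_outside_M:
  assumes normal: "M \<lhd> G" and g: "g \<in> carrier G" "g \<notin> M"
  shows "card (centralizer G {g}) = card (rcosets M) * card (group_center G)"
proof -
  let ?C = "centralizer G {g}"
  let ?Z = "group_center G"
  have C: "subgroup ?C G"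
    using g by (simp add: subgroup_centralizer)
  \<comment> \<open>Second isomorphism theorem: C/(C \<inter> M) \<cong> CM/M, and CM = G by maximality of M.\<close>
  interpret I: second_isomorphism_grp M G ?C
    using normal C by (simp add: second_isomorphism_grp_def second_isomorphism_grp_axioms_def)
  have "g \<in> M <#> ?C"
    using I.S_contained_in_set_mult g by (auto simp: centralizer_def)
  then have MC: "M <#> ?C = carrier G"
    using maximal I.normal_set_mult_subgroup I.H_contained_in_set_mult g(2)
    unfolding maximal_subgroup_def by blast
  have "order ((G\<lparr>carrier := ?C\<rparr>) Mod ?Z) = order (G Mod M)"
    using iso_same_order[OF I.normal_intersection_quotient_isom] centralizer_Int_M[OF g] MC
    by (simp add: Int_commute)
  moreover have "subgroup ?Z (G\<lparr>carrier := ?C\<rparr>)"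
    using subgroup_incl[OF subgroup_center C] centralizer_Int_M[OF g] by blast
  then have "order ((G\<lparr>carrier := ?C\<rparr>) Mod ?Z) * card ?Z = card ?C"
    using group.lagrange[OF subgroup_imp_group[OF C]] by (simp add: order_def FactGroup_def)
  ultimately show ?thesis
    by (simp add: order_def FactGroup_def)
qed

lemma alpha_mult_order_closed_form:
  assumes fin: "finite (carrier G)" and normal: "M \<lhd> G"
  shows "alpha G n * order G =
    card (group_center G) * order G ^ n
    + (card M - card (group_center G)) * card M ^ n
    + (order G - card M) * (card (rcosets M) * card (group_center G)) ^ n"
proof -
  let ?Z = "group_center G"
  let ?c = "\<lambda>g. card (centralizer G {g}) ^ n"
  have fin_M: "finite M"
    using finite_subset[OF M_subset_carrier fin] .
  have fin_Z: "finite ?Z"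
    using finite_subset[OF center_subset_M fin_M] .
  have "(\<Sum>g \<in> carrier G. ?c g) = sum ?c ?Z + sum ?c (M - ?Z) + sum ?c (carrier G - M)"
    using sum.subset_diff[OF M_subset_carrier fin, of ?c] sum.subset_diff[OF center_subset_M fin_M, of ?c] by simp
  also have "sum ?c ?Z = card ?Z * order G ^ n"
  proof -
    have "?c g = order G ^ n" if "g \<in> ?Z" for g
      using that centralizer_eq_carrier_iff[of g] center_subset_M M_subset_carrier by (auto simp: order_def)
    then show ?thesis by simp
  qed
  also have "sum ?c (M - ?Z) = (card M - card ?Z) * card M ^ n"
  proof -
    have "?c g = card M ^ n" if "g \<in> M - ?Z" for g
      using that centralizer_eq_M by simp
    then show ?thesis
      using card_Diff_subset[OF fin_Z center_subset_M] by simp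
  qed
  also have "sum ?c (carrier G - M) = (order G - card M) * (card (rcosets M) * card ?Z) ^ n"
  proof -
    have "?c g = (card (rcosets M) * card ?Z) ^ n" if "g \<in> carrier G - M" for g
      using that card_centralizer_outside_M[OF normal] by simp
    then show ?thesis
      using card_Diff_subset[OF fin_M M_subset_carrier] by (simp add: order_def)
  qed
  finally show ?thesis
    using alpha_mult_order_eq_sum_card_centralizer[OF fin] by simp
qed

lemma A_series_eq:
  assumes fin: "finite (carrier G)" and normal: "M \<lhd> G"
  shows "A_series G =
    fps_const (1 / of_nat (order G)) *
      (fps_const (of_nat (card (group_center G))) *
          inverse (1 - fps_const (of_nat (order G)) * fps_X)
       + fps_const (of_nat (order G) - of_nat (card M)) *
          inverse (1 - fps_const (of_nat (card (rcosets M)) * of_nat (card (group_center G))) * fps_X)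
       + fps_const (of_nat (card M) - of_nat (card (group_center G))) *
          inverse (1 - fps_const (of_nat (card M)) * fps_X))"
proof (unfold inverse_one_minus_const_X, rule fps_ext)
  fix n
  let ?g = "of_nat (order G) :: rat" and ?m = "of_nat (card M) :: rat"
    and ?z = "of_nat (card (group_center G)) :: rat" and ?i = "of_nat (card (rcosets M)) :: rat"
  have "card (group_center G) \<le> card M" "card M \<le> order G"
    using card_mono[OF finite_subset[OF M_subset_carrier fin] center_subset_M]
      card_mono[OF fin M_subset_carrier] by (simp_all add: order_def)
  then have "of_nat (alpha G n) * ?g = ?z * ?g ^ n + (?m - ?z) * ?m ^ n + (?g - ?m) * (?i * ?z) ^ n"
    using arg_cong[OF alpha_mult_order_closed_form[OF fin normal, of n], of "of_nat :: nat \<Rightarrow> rat"]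
    by (simp add: of_nat_diff)
  moreover have "order G \<noteq> 0"
    using fin by (simp add: order_gt_0_iff_finite[symmetric])
  ultimately have alpha: "of_nat (alpha G n) =
      1 / ?g * (?z * ?g ^ n + (?g - ?m) * (?i * ?z) ^ n + (?m - ?z) * ?m ^ n)"
    by (simp add: field_simps)
  show "fps_nth (A_series G) n = fps_nth (fps_const (1 / ?g) *
      (fps_const ?z * Abs_fps (\<lambda>n. ?g ^ n) + fps_const (?g - ?m) * Abs_fps (\<lambda>n. (?i * ?z) ^ n)
       + fps_const (?m - ?z) * Abs_fps (\<lambda>n. ?m ^ n))) n"
    unfolding A_series_def fps_mult_left_const_nth fps_add_nth fps_nth_Abs_fps alpha ..
qed

end

theorem theorem7p4:
  fixes G :: "('a, 'b) monoid_scheme" and p :: nat and M :: "'a set"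
  assumes "group G"
    and "finite (carrier G)"
    and "Factorial_Ring.prime p"
    and "\<exists>k. card (carrier G) = p ^ k"
    and "\<not> comm_group G"
    and "maximal_subgroup M G"
    and "\<forall>x \<in> M. \<forall>y \<in> M. x \<otimes>\<^bsub>G\<^esub> y = y \<otimes>\<^bsub>G\<^esub> x"
  shows "A_series G =
    fps_const (1 / of_nat (card (carrier G))) *
      (fps_const (of_nat (card (group_center G))) *
          inverse (1 - fps_const (of_nat (card (carrier G))) * fps_X)
       + fps_const (of_nat (card (carrier G)) - of_nat (card M)) *
          inverse (1 - fps_const (of_nat p * of_nat (card (group_center G))) * fps_X)
       + fps_const (of_nat (card M) - of_nat (card (group_center G))) *
          inverse (1 - fps_const (of_nat (card M)) * fps_X))"
proof -
  interpret pgroup G p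
    using assms(1-4) by (intro pgroup.intro pgroup_axioms.intro) (simp_all add: order_def)
  interpret abelian_maximal_subgroup G M
    using assms(1,5-7) by (intro abelian_maximal_subgroup.intro abelian_maximal_subgroup_axioms.intro)
  have "M \<lhd> G"
    using maximal_subgroup_normal[OF assms(6)] .
  then show ?thesis
    using A_series_eq[OF finite_carrier] card_rcosets_maximal_subgroup[OF assms(6)]
    by (simp add: order_def)
qed

end
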